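(* Let $G$ be a directed graph on vertex set $V$, $|V|=n$, with edge weights in $\{1,\dots,M\}$, let $C>0$, and let $\pi:V\to[n]$ be a bijection such that $\pi(w(u,v))\le CMn\ln n/\|uv\|$ for all $u,v$ with $2\le|uv|<\infty$. Let $r\ge1$ and $\mathcal{H}_r=\{z\in V:\pi(z)\le CMn\ln n/r\}$. Define $A[u,z]=\|uz\|$ if $\|uz\|\le 2r$ and $u\ne z$, else $+\infty$ ($u\in V$, $z\in\mathcal{H}_r$), and $B[z,v]=\|zv\|$ if $\|zv\|\le 2r$ and $z\ne v$, else $+\infty$. Then for all $u,v\in V$ with $r\le\|uv\|<2r$: if $|uv|=1$, no $z\in\mathcal{H}_r$ satisfies $A[u,z]+B[z,v]=\|uv\|$; if $|uv|\ge2$, the vertex $z\in\mathcal{H}_r$ minimizing $\pi(z)$ subject to $A[u,z]+B[z,v]=\|uv\|$ exists and equals $w(u,v)$.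
   Context: $\|uv\|$ is the shortest path distance from $u$ to $v$; $|uv|$ is the largest number of edges in any shortest $u\to v$ path ($\infty$ if unreachable). For $2\le|uv|<\infty$, $w(u,v)$ is the vertex $w\notin\{u,v\}$ with $\|uv\|=\|uw\|+\|wv\|$ minimizing $\pi(w)$. *)

theory Defs
  imports "HOL-Analysis.Analysis" "HOL-Library.Extended_Real"
begin

definition is_path :: "('a \<times> 'a) set \<Rightarrow> 'a \<Rightarrow> 'a list \<Rightarrow> 'a \<Rightarrow> bool" where
  "is_path E u xs v \<longleftrightarrow> xs \<noteq> [] \<and> hd xs = u \<and> last xs = v \<and>
     (\<forall>i < length xs - 1. (xs ! i, xs ! (i+1)) \<in> E)"

definition path_weight :: "('a \<Rightarrow> 'a \<Rightarrow> nat) \<Rightarrow> 'a list \<Rightarrow> nat" where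
  "path_weight wt xs = (\<Sum>i < length xs - 1. wt (xs ! i) (xs ! (i+1)))"

definition spdist :: "('a \<times> 'a) set \<Rightarrow> ('a \<Rightarrow> 'a \<Rightarrow> nat) \<Rightarrow> 'a \<Rightarrow> 'a \<Rightarrow> ereal" where
  "spdist E wt u v = (INF xs \<in> {xs. is_path E u xs v}. ereal (real (path_weight wt xs)))"

definition shortest_paths :: "('a \<times> 'a) set \<Rightarrow> ('a \<Rightarrow> 'a \<Rightarrow> nat) \<Rightarrow> 'a \<Rightarrow> 'a \<Rightarrow> 'a list set" where
  "shortest_paths E wt u v =
     {xs. is_path E u xs v \<and> ereal (real (path_weight wt xs)) = spdist E wt u v}"

definition hops :: "('a \<times> 'a) set \<Rightarrow> ('a \<Rightarrow> 'a \<Rightarrow> nat) \<Rightarrow> 'a \<Rightarrow> 'a \<Rightarrow> enat" where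
  "hops E wt u v = (if shortest_paths E wt u v = {} then \<infinity>
      else (SUP xs \<in> shortest_paths E wt u v. enat (length xs - 1)))"

text \<open>w(u,v): vertex w not in {u,v} on a shortest u-v path minimizing pi(w).\<close>
definition wvert :: "'a set \<Rightarrow> ('a \<times> 'a) set \<Rightarrow> ('a \<Rightarrow> 'a \<Rightarrow> nat) \<Rightarrow> ('a \<Rightarrow> nat) \<Rightarrow> 'a \<Rightarrow> 'a \<Rightarrow> 'a" where
  "wvert V E wt \<pi> u v = arg_min_on \<pi>
     {w \<in> V. w \<noteq> u \<and> w \<noteq> v \<and> spdist E wt u v = spdist E wt u w + spdist E wt w v}"

end

theory Submission imports Defs begin

text \<open>If the distance \<open>d\<close> of \<open>u\<close> and \<open>v\<close> lies in \<open>[r, 2r)\<close>, then every vertex \<open>z\<close> splitting it,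
  i.e. \<open>d = \<parallel>uz\<parallel> + \<parallel>zv\<parallel>\<close> with \<open>z \<notin> {u, v}\<close>, has both partial distances below \<open>2r\<close>, so
  \<open>A[u,z] + B[z,v] = d\<close> says exactly that \<open>z\<close> splits \<open>(u, v)\<close>. A splitting vertex exists iff
  some shortest path has at least two edges, i.e. iff \<open>|uv| \<ge> 2\<close>. In that case \<open>w(u,v)\<close> is the
  splitting vertex of least rank, and the hypothesis on \<open>\<pi>\<close> together with \<open>d \<ge> r\<close> puts it
  into \<open>H\<^sub>r\<close>; so it is also the splitting vertex of least rank within \<open>H\<^sub>r\<close>.\<close>

definition split_vertices :: "'a set \<Rightarrow> ('a \<times> 'a) set \<Rightarrow> ('a \<Rightarrow> 'a \<Rightarrow> nat) \<Rightarrow> 'a \<Rightarrow> 'a \<Rightarrow> 'a set" where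
  "split_vertices V E wt u v =
     {w \<in> V. w \<noteq> u \<and> w \<noteq> v \<and> spdist E wt u v = spdist E wt u w + spdist E wt w v}"

lemma wvert_least_split_vertex:
  assumes "finite V" and "split_vertices V E wt u v \<noteq> {}"
  shows "wvert V E wt \<pi> u v \<in> split_vertices V E wt u v"
    and "z \<in> split_vertices V E wt u v \<Longrightarrow> \<pi> (wvert V E wt \<pi> u v) \<le> \<pi> z"
proof -
  have wvert_eq: "wvert V E wt \<pi> u v = arg_min_on \<pi> (split_vertices V E wt u v)"
    by (simp add: wvert_def split_vertices_def)
  have "finite (split_vertices V E wt u v)" using assms(1) by (simp add: split_vertices_def)
  with assms(2) show "wvert V E wt \<pi> u v \<in> split_vertices V E wt u v"
    and "z \<in> split_vertices V E wt u v \<Longrightarrow> \<pi> (wvert V E wt \<pi> u v) \<le> \<pi> z"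
    unfolding wvert_eq by (auto intro: arg_min_if_finite(1) arg_min_least)
qed

lemma is_path_Nil [simp]: "\<not> is_path E u [] v"
  by (simp add: is_path_def)

lemma is_path_single [simp]: "is_path E u [x] v \<longleftrightarrow> x = u \<and> x = v"
  by (auto simp: is_path_def)

lemma is_path_Cons_Cons:
  "is_path E u (x # y # xs) v \<longleftrightarrow> x = u \<and> (x, y) \<in> E \<and> is_path E y (y # xs) v"
  by (auto simp: is_path_def less_Suc_eq_0_disj)

lemma path_weight_single [simp]: "path_weight wt [x] = 0"
  by (simp add: path_weight_def)

lemma path_weight_Cons_Cons:
  "path_weight wt (x # y # xs) = wt x y + path_weight wt (y # xs)"
proof -
  have length_eq: "length (x # y # xs) - 1 = Suc (length (y # xs) - 1)" by simp
  show ?thesis unfolding path_weight_def length_eq sum.lessThan_Suc_shift by simp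
qed

lemma is_path_append:
  "is_path E u xs z \<Longrightarrow> is_path E z ys v \<Longrightarrow> is_path E u (xs @ tl ys) v"
proof (induction xs arbitrary: u rule: induct_list012)
  case (2 x)
  then show ?case by (cases ys) (auto simp: is_path_def)
next
  case (3 x y xs)
  then show ?case using "3.IH"(2)[of y] by (auto simp: is_path_Cons_Cons)
qed simp

lemma path_weight_append:
  "is_path E u xs z \<Longrightarrow> is_path E z ys v \<Longrightarrow>
   path_weight wt (xs @ tl ys) = path_weight wt xs + path_weight wt ys"
proof (induction xs arbitrary: u rule: induct_list012)
  case (2 x)
  then show ?case by (cases ys) (auto simp: is_path_def)
next
  case (3 x y xs)
  then show ?case using "3.IH"(2)[of y] by (auto simp: is_path_Cons_Cons path_weight_Cons_Cons)
qed simp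

lemma is_path_length_ge_2: "is_path E u xs v \<Longrightarrow> u \<noteq> v \<Longrightarrow> 2 \<le> length xs"
  by (cases xs; cases "tl xs") (auto simp: is_path_def)

lemma length_le_path_weight:
  assumes "is_path E u xs v" and "\<forall>(x, y) \<in> E. 1 \<le> wt x y"
  shows "length xs - 1 \<le> path_weight wt xs"
  using assms(1)
proof (induction xs arbitrary: u rule: induct_list012)
  case (3 x y xs)
  then have "1 \<le> wt x y" using assms(2) by (auto simp: is_path_Cons_Cons)
  with 3 "3.IH"(2)[of y] show ?case by (auto simp: is_path_Cons_Cons path_weight_Cons_Cons)
qed simp_all

lemma spdist_le_path_weight: "is_path E u xs v \<Longrightarrow> spdist E wt u v \<le> ereal (path_weight wt xs)"
  unfolding spdist_def by (rule INF_lower) simp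

lemma spdist_nonneg: "0 \<le> spdist E wt u v"
  unfolding spdist_def by (rule INF_greatest) simp

lemma spdist_self [simp]: "spdist E wt u u = 0"
  using spdist_le_path_weight[of E u "[u]" u wt] spdist_nonneg[of E wt u u]
  by (simp add: zero_ereal_def antisym)

lemma spdist_attained:
  assumes "spdist E wt u v \<noteq> \<infinity>"
  obtains xs where "is_path E u xs v" and "spdist E wt u v = ereal (path_weight wt xs)"
proof -
  define P where "P k \<longleftrightarrow> (\<exists>xs. is_path E u xs v \<and> path_weight wt xs = k)" for k
  have "\<exists>xs. is_path E u xs v"
  proof (rule ccontr)
    assume "\<nexists>xs. is_path E u xs v"
    then have "spdist E wt u v = \<infinity>" unfolding spdist_def by (simp add: top_ereal_def)
    with assms show False by contradiction
  qed
  then have "\<exists>k. P k" unfolding P_def by blast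
  then have "P (LEAST k. P k)" by (rule LeastI_ex)
  then obtain xs where xs: "is_path E u xs v" "path_weight wt xs = (LEAST k. P k)"
    unfolding P_def by blast
  have "ereal (path_weight wt xs) \<le> spdist E wt u v"
    unfolding spdist_def
  proof (rule INF_greatest)
    fix ys assume "ys \<in> {ys. is_path E u ys v}"
    then have "P (path_weight wt ys)" unfolding P_def by blast
    then show "ereal (path_weight wt xs) \<le> ereal (path_weight wt ys)"
      unfolding xs(2) by (simp add: Least_le)
  qed
  with spdist_le_path_weight[OF xs(1)] have "spdist E wt u v = ereal (path_weight wt xs)"
    by (rule antisym)
  with xs(1) show ?thesis by (rule that)
qed

lemma spdist_triangle: "spdist E wt u v \<le> spdist E wt u z + spdist E wt z v"
proof (cases "spdist E wt u z = \<infinity> \<or> spdist E wt z v = \<infinity>")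
  case True
  then show ?thesis using spdist_nonneg[of E wt u z] spdist_nonneg[of E wt z v] by auto
next
  case False
  then obtain p q where p: "is_path E u p z" "spdist E wt u z = ereal (path_weight wt p)"
    and q: "is_path E z q v" "spdist E wt z v = ereal (path_weight wt q)"
    by (metis spdist_attained)
  have "spdist E wt u v \<le> ereal (path_weight wt (p @ tl q))"
    using is_path_append[OF p(1) q(1)] by (rule spdist_le_path_weight)
  also have "\<dots> = spdist E wt u z + spdist E wt z v"
    using path_weight_append[OF p(1) q(1)] p(2) q(2) by simp
  finally show ?thesis .
qed

lemma shortest_path_first_edge_split:
  assumes "u # w # xs \<in> shortest_paths E wt u v"
  shows "spdist E wt u w = wt u w" and "spdist E wt w v = path_weight wt (w # xs)"
proof -
  have path: "is_path E u (u # w # xs) v"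
    and weight: "spdist E wt u v = wt u w + path_weight wt (w # xs)"
    using assms by (auto simp: shortest_paths_def path_weight_Cons_Cons)
  have "is_path E u [u, w] w" "is_path E w (w # xs) v"
    using path by (auto simp: is_path_Cons_Cons)
  then have le1: "spdist E wt u w \<le> wt u w"
    and le2: "spdist E wt w v \<le> path_weight wt (w # xs)"
    using spdist_le_path_weight[of E u "[u, w]" w wt] spdist_le_path_weight[of E w "w # xs" v wt]
    by (auto simp: path_weight_Cons_Cons)
  have tri: "spdist E wt u v \<le> spdist E wt u w + spdist E wt w v" by (rule spdist_triangle)
  obtain a where a: "spdist E wt u w = ereal a"
    using le1 spdist_nonneg[of E wt u w] by (cases "spdist E wt u w") auto
  obtain b where b: "spdist E wt w v = ereal b"
    using le2 spdist_nonneg[of E wt w v] by (cases "spdist E wt w v") auto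
  have "a \<le> wt u w" "b \<le> path_weight wt (w # xs)" "wt u w + path_weight wt (w # xs) \<le> a + b"
    using le1 le2 tri weight a b by simp_all
  then show "spdist E wt u w = wt u w" "spdist E wt w v = path_weight wt (w # xs)"
    using a b by simp_all
qed

lemma length_le_hops:
  "xs \<in> shortest_paths E wt u v \<Longrightarrow> enat (length xs - 1) \<le> hops E wt u v"
  unfolding hops_def by (auto intro: SUP_upper)

lemma shortest_paths_nonempty:
  "spdist E wt u v \<noteq> \<infinity> \<Longrightarrow> shortest_paths E wt u v \<noteq> {}"
  by (metis (mono_tags, lifting) empty_iff mem_Collect_eq shortest_paths_def spdist_attained)

lemma hops_finite:
  assumes "spdist E wt u v \<noteq> \<infinity>" and pos: "\<forall>(x, y) \<in> E. 1 \<le> wt x y"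
  shows "hops E wt u v < \<infinity>"
proof -
  obtain p where p: "p \<in> shortest_paths E wt u v"
    using shortest_paths_nonempty[OF assms(1)] by blast
  have "length xs - 1 \<le> path_weight wt p" if xs: "xs \<in> shortest_paths E wt u v" for xs
  proof -
    have "ereal (path_weight wt xs) = ereal (path_weight wt p)"
      using xs p by (simp add: shortest_paths_def)
    moreover have "is_path E u xs v" using xs by (simp add: shortest_paths_def)
    ultimately show ?thesis using length_le_path_weight[OF _ pos] by fastforce
  qed
  then have "hops E wt u v \<le> enat (path_weight wt p)"
    unfolding hops_def using p by (auto intro!: SUP_least)
  then show ?thesis by (rule le_less_trans) simp
qed

lemma hops_ge_2_if_split:
  assumes "z \<noteq> u" "z \<noteq> v" and split: "spdist E wt u v = spdist E wt u z + spdist E wt z v"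
    and "spdist E wt u v \<noteq> \<infinity>"
  shows "2 \<le> hops E wt u v"
proof -
  have "spdist E wt u z \<noteq> \<infinity>" "spdist E wt z v \<noteq> \<infinity>"
    using assms(4) spdist_nonneg[of E wt u z] spdist_nonneg[of E wt z v] unfolding split by auto
  then obtain p q where p: "is_path E u p z" "spdist E wt u z = ereal (path_weight wt p)"
    and q: "is_path E z q v" "spdist E wt z v = ereal (path_weight wt q)"
    by (metis spdist_attained)
  have "p @ tl q \<in> shortest_paths E wt u v"
    using is_path_append[OF p(1) q(1)] path_weight_append[OF p(1) q(1)] p(2) q(2) split
    by (simp add: shortest_paths_def)
  then have "enat (length (p @ tl q) - 1) \<le> hops E wt u v" by (rule length_le_hops)
  moreover have "2 \<le> enat (length (p @ tl q) - 1)"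
    using is_path_length_ge_2[OF p(1)] is_path_length_ge_2[OF q(1)] assms(1,2) by simp
  ultimately show ?thesis by (rule order_trans[rotated])
qed

lemma long_shortest_path_if_hops_ge_2:
  assumes "spdist E wt u v \<noteq> \<infinity>" and "2 \<le> hops E wt u v"
  obtains w xs where "u # w # xs \<in> shortest_paths E wt u v" and "xs \<noteq> []"
proof -
  have "\<exists>q \<in> shortest_paths E wt u v. 2 \<le> length q - 1"
  proof (rule ccontr)
    assume "\<not> ?thesis"
    then have "hops E wt u v \<le> 1"
      using shortest_paths_nonempty[OF assms(1)] unfolding hops_def
      by (auto intro!: SUP_least simp: one_enat_def)
    with assms(2) have "(2::enat) \<le> 1" by (rule order_trans)
    then show False by simp
  qed
  then obtain q where q: "q \<in> shortest_paths E wt u v" "2 \<le> length q - 1" by blast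
  then obtain x w xs where "q = x # w # xs" "xs \<noteq> []"
    by (cases q rule: remdups_adj.cases) (auto simp: Suc_le_eq)
  moreover have "x = u" using q(1) calculation by (simp add: shortest_paths_def is_path_def)
  ultimately show ?thesis using q(1) that by blast
qed

lemma split_vertex_if_hops_ge_2:
  assumes "spdist E wt u v \<noteq> \<infinity>" and "2 \<le> hops E wt u v"
    and pos: "\<forall>(x, y) \<in> E. 1 \<le> wt x y" and "E \<subseteq> V \<times> V"
  shows "split_vertices V E wt u v \<noteq> {}"
proof -
  obtain w xs where q: "u # w # xs \<in> shortest_paths E wt u v" and "xs \<noteq> []"
    using long_shortest_path_if_hops_ge_2[OF assms(1,2)] .
  then have uw: "(u, w) \<in> E" and rest: "is_path E w (w # xs) v"
    by (auto simp: shortest_paths_def is_path_Cons_Cons)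
  have du: "spdist E wt u w = wt u w" and dv: "spdist E wt w v = path_weight wt (w # xs)"
    using shortest_path_first_edge_split[OF q] by blast+
  have "0 < wt u w" using pos uw by auto
  with du have "w \<noteq> u" by auto
  have "0 < path_weight wt (w # xs)"
    using length_le_path_weight[OF rest pos] \<open>xs \<noteq> []\<close> by (cases xs) auto
  with dv have "w \<noteq> v" by auto
  have "spdist E wt u v = spdist E wt u w + spdist E wt w v"
    using q du dv by (simp add: shortest_paths_def path_weight_Cons_Cons)
  with \<open>w \<noteq> u\<close> \<open>w \<noteq> v\<close> uw \<open>E \<subseteq> V \<times> V\<close> show ?thesis
    unfolding split_vertices_def by blast
qed

lemma truncated_sum_eq_spdist_iff:
  assumes A_def: "\<forall>u z. A u z = (if spdist E wt u z \<le> ereal (2 * r) \<and> u \<noteq> z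
                                then spdist E wt u z else \<infinity>)"
    and B_def: "\<forall>z v. B z v = (if spdist E wt z v \<le> ereal (2 * r) \<and> z \<noteq> v
                                then spdist E wt z v else \<infinity>)"
    and short: "spdist E wt u v < ereal (2 * r)"
  shows "A u z + B z v = spdist E wt u v \<longleftrightarrow>
         z \<noteq> u \<and> z \<noteq> v \<and> spdist E wt u v = spdist E wt u z + spdist E wt z v"
proof
  assume eq: "A u z + B z v = spdist E wt u v"
  have "A u z \<noteq> -\<infinity>" "B z v \<noteq> -\<infinity>"
    using A_def B_def spdist_nonneg[of E wt u z] spdist_nonneg[of E wt z v] by auto
  with eq short have "A u z \<noteq> \<infinity>" "B z v \<noteq> \<infinity>" by auto
  with A_def B_def eq show "z \<noteq> u \<and> z \<noteq> v \<and> spdist E wt u v = spdist E wt u z + spdist E wt z v"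
    by (auto split: if_splits)
next
  assume split: "z \<noteq> u \<and> z \<noteq> v \<and> spdist E wt u v = spdist E wt u z + spdist E wt z v"
  then have "spdist E wt u z \<le> spdist E wt u v" "spdist E wt z v \<le> spdist E wt u v"
    by (auto intro: add_increasing add_increasing2 spdist_nonneg)
  with short split A_def B_def show "A u z + B z v = spdist E wt u v" by auto
qed

lemma ereal_divide_le_lower_bound:
  fixes d :: ereal
  assumes "ereal a \<le> ereal X / d" "ereal r \<le> d" "d \<noteq> \<infinity>" "0 < r" "0 \<le> X"
  shows "a \<le> X / r"
proof -
  obtain d' where d': "d = ereal d'" "r \<le> d'" using assms(2,3) by (cases d) auto
  then have "a \<le> X / d'" using assms(1,4) by simp
  also have "\<dots> \<le> X / r" using d' assms(4,5) by (intro divide_left_mono) auto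
  finally show ?thesis .
qed

theorem mainTheorem10:
  fixes V :: "'a set" and E :: "('a \<times> 'a) set" and wt :: "'a \<Rightarrow> 'a \<Rightarrow> nat"
    and M :: nat and C :: real and \<pi> :: "'a \<Rightarrow> nat" and r :: real
    and Hr :: "'a set" and A B :: "'a \<Rightarrow> 'a \<Rightarrow> ereal"
  assumes finV: "finite V"
    and EV: "E \<subseteq> V \<times> V"
    and wts: "\<forall>(x, y) \<in> E. wt x y \<in> {1..M}"
    and Cpos: "C > 0"
    and pibij: "bij_betw \<pi> V {1..card V}"
    and hub: "\<forall>u \<in> V. \<forall>v \<in> V. 2 \<le> hops E wt u v \<and> hops E wt u v < \<infinity> \<longrightarrow>
        ereal (real (\<pi> (wvert V E wt \<pi> u v)))
          \<le> ereal (C * real M * real (card V) * ln (real (card V))) / spdist E wt u v"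
    and r1: "r \<ge> 1"
    and Hr_def: "Hr = {z \<in> V. real (\<pi> z) \<le> C * real M * real (card V) * ln (real (card V)) / r}"
    and A_def: "\<forall>u z. A u z = (if spdist E wt u z \<le> ereal (2 * r) \<and> u \<noteq> z
                                then spdist E wt u z else \<infinity>)"
    and B_def: "\<forall>z v. B z v = (if spdist E wt z v \<le> ereal (2 * r) \<and> z \<noteq> v
                                then spdist E wt z v else \<infinity>)"
  shows "\<forall>u \<in> V. \<forall>v \<in> V. ereal r \<le> spdist E wt u v \<and> spdist E wt u v < ereal (2 * r) \<longrightarrow>
           (hops E wt u v = 1 \<longrightarrow> \<not> (\<exists>z \<in> Hr. A u z + B z v = spdist E wt u v)) \<and>
           (hops E wt u v \<ge> 2 \<longrightarrow>
              (let w = wvert V E wt \<pi> u v in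
                 w \<in> Hr \<and> A u w + B w v = spdist E wt u v \<and>
                 (\<forall>z \<in> Hr. A u z + B z v = spdist E wt u v \<longrightarrow> \<pi> w \<le> \<pi> z)))"
proof (intro ballI impI conjI)
  fix u v assume "u \<in> V" "v \<in> V"
    and dist: "ereal r \<le> spdist E wt u v \<and> spdist E wt u v < ereal (2 * r)"
  define S where "S = split_vertices V E wt u v"
  have pos: "\<forall>(x, y) \<in> E. 1 \<le> wt x y" using wts by auto
  have fin: "spdist E wt u v \<noteq> \<infinity>" using dist by auto
  have HrV: "Hr \<subseteq> V" using Hr_def by auto
  have AB: "A u z + B z v = spdist E wt u v \<longleftrightarrow> z \<in> S" if "z \<in> V" for z
    using truncated_sum_eq_spdist_iff[OF A_def B_def] dist that
    by (auto simp: S_def split_vertices_def)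
  show "\<not> (\<exists>z \<in> Hr. A u z + B z v = spdist E wt u v)" if "hops E wt u v = 1"
    using that AB HrV hops_ge_2_if_split[OF _ _ _ fin] by (force simp: S_def split_vertices_def)
  show "let w = wvert V E wt \<pi> u v in w \<in> Hr \<and> A u w + B w v = spdist E wt u v \<and>
          (\<forall>z \<in> Hr. A u z + B z v = spdist E wt u v \<longrightarrow> \<pi> w \<le> \<pi> z)"
    if hops: "2 \<le> hops E wt u v"
  proof -
    define w where "w = wvert V E wt \<pi> u v"
    have "S \<noteq> {}" using split_vertex_if_hops_ge_2[OF fin hops pos EV] by (simp add: S_def)
    then have wS: "w \<in> S" and w_least: "\<And>z. z \<in> S \<Longrightarrow> \<pi> w \<le> \<pi> z"
      using wvert_least_split_vertex[OF finV] unfolding w_def S_def by blast+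
    define X where "X = C * real M * real (card V) * ln (real (card V))"
    have "1 \<le> card V" using \<open>u \<in> V\<close> finV by (metis One_nat_def Suc_leI card_gt_0_iff empty_iff)
    then have "0 \<le> X" unfolding X_def using Cpos by (intro mult_nonneg_nonneg) auto
    moreover have "ereal (\<pi> w) \<le> ereal X / spdist E wt u v"
      using hub \<open>u \<in> V\<close> \<open>v \<in> V\<close> hops hops_finite[OF fin pos] unfolding w_def X_def by blast
    ultimately have "\<pi> w \<le> X / r"
      using dist fin r1 by (intro ereal_divide_le_lower_bound) auto
    then have "w \<in> Hr" using wS unfolding Hr_def X_def by (simp add: S_def split_vertices_def)
    then show ?thesis
      using AB HrV wS w_least unfolding w_def[symmetric] by auto
  qed
qed

end
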